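(* Let $G$ be an infinite locally finite graph and $D$ a finite connected graph. Identify $G$ with one of its copies $G\times\{x_0\}$ ($x_0\in V(D)$) in the Cartesian product $G\square D$. Then $G$ is faithful to $G\square D$.
   Context: A ray is a one-way infinite path; two rays of a graph $H$ are equivalent in $H$ if for every finite $S\subseteq V(H)$ some component of $H-S$ contains tails of both; the classes are the ends of $H$. A subgraph $A$ of $B$ is faithful to $B$ if (i) every end of $B$ contains a ray of $A$, and (ii) any two rays of $A$ are equivalent in $A$ if and only if they are equivalent in $B$. *)

theory Defs
  imports Main
begin

record 'a graph =
  verts :: "'a set"
  adj :: "'a \<Rightarrow> 'a \<Rightarrow> bool"

definition is_graph :: "'a graph \<Rightarrow> bool" where
  "is_graph H \<longleftrightarrow>
     (\<forall>x y. adj H x y \<longrightarrow> x \<in> verts H \<and> y \<in> verts H) \<and>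
     (\<forall>x y. adj H x y \<longrightarrow> adj H y x) \<and>
     (\<forall>x. \<not> adj H x x)"

definition locally_finite :: "'a graph \<Rightarrow> bool" where
  "locally_finite H \<longleftrightarrow> (\<forall>v\<in>verts H. finite {u. adj H v u})"

text \<open>Reachability in the graph \<open>H - S\<close> (vertices of \<open>S\<close> deleted).\<close>
definition reach_minus :: "'a graph \<Rightarrow> 'a set \<Rightarrow> 'a \<Rightarrow> 'a \<Rightarrow> bool" where
  "reach_minus H S x y \<longleftrightarrow>
     x \<in> verts H - S \<and>
     (\<lambda>u v. adj H u v \<and> u \<notin> S \<and> v \<notin> S)\<^sup>*\<^sup>* x y"

definition connected_graph :: "'a graph \<Rightarrow> bool" where
  "connected_graph H \<longleftrightarrow> verts H \<noteq> {} \<and>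
     (\<forall>x\<in>verts H. \<forall>y\<in>verts H. reach_minus H {} x y)"

definition components_minus :: "'a graph \<Rightarrow> 'a set \<Rightarrow> 'a set set" where
  "components_minus H S = {{y. reach_minus H S x y} | x. x \<in> verts H - S}"

definition is_ray :: "'a graph \<Rightarrow> (nat \<Rightarrow> 'a) \<Rightarrow> bool" where
  "is_ray H r \<longleftrightarrow> inj r \<and> (\<forall>i. r i \<in> verts H) \<and> (\<forall>i. adj H (r i) (r (Suc i)))"

definition ray_equiv :: "'a graph \<Rightarrow> (nat \<Rightarrow> 'a) \<Rightarrow> (nat \<Rightarrow> 'a) \<Rightarrow> bool" where
  "ray_equiv H r s \<longleftrightarrow>
     (\<forall>S. finite S \<and> S \<subseteq> verts H \<longrightarrow>
        (\<exists>C\<in>components_minus H S. \<exists>n m. r ` {n..} \<subseteq> C \<and> s ` {m..} \<subseteq> C))"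

definition subgraph :: "'a graph \<Rightarrow> 'a graph \<Rightarrow> bool" where
  "subgraph A B \<longleftrightarrow> verts A \<subseteq> verts B \<and> (\<forall>x y. adj A x y \<longrightarrow> adj B x y)"

text \<open>Faithfulness. Ends are equivalence classes of rays; "every end of B
contains a ray of A" means every ray of B is equivalent in B to some ray of A.\<close>
definition faithful :: "'a graph \<Rightarrow> 'a graph \<Rightarrow> bool" where
  "faithful A B \<longleftrightarrow> subgraph A B \<and>
     (\<forall>r. is_ray B r \<longrightarrow> (\<exists>s. is_ray A s \<and> ray_equiv B r s)) \<and>
     (\<forall>r s. is_ray A r \<and> is_ray A s \<longrightarrow> (ray_equiv A r s \<longleftrightarrow> ray_equiv B r s))"

definition cart_prod :: "'a graph \<Rightarrow> 'b graph \<Rightarrow> ('a \<times> 'b) graph" where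
  "cart_prod G D = \<lparr> verts = verts G \<times> verts D,
     adj = (\<lambda>(g, d) (g', d'). g \<in> verts G \<and> g' \<in> verts G \<and> d \<in> verts D \<and> d' \<in> verts D \<and>
              ((g = g' \<and> adj D d d') \<or> (d = d' \<and> adj G g g'))) \<rparr>"

definition layer :: "'a graph \<Rightarrow> 'b \<Rightarrow> ('a \<times> 'b) graph" where
  "layer G x0 = \<lparr> verts = verts G \<times> {x0},
     adj = (\<lambda>(g, d) (g', d'). d = x0 \<and> d' = x0 \<and> adj G g g') \<rparr>"

end

(* Any ray of G \<box> D projects to a walk in G that may pause but meets each vertex only
   finitely often (D is finite and the ray is injective); such a walk contains a ray of G.
   The copy of that ray in the layer G \<times> {x0} is equivalent to the original one: for a
   finite S, late tails of both avoid S, and they are linked inside a fibre {g} \<times> V(D) with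
   g outside fst ` S, which is a connected copy of D.
   Conversely, rays of the layer that are equivalent in G \<box> D are equivalent in the layer:
   a finite T \<times> {x0} of the layer is thickened to the finite T \<times> V(D), and walks in
   G \<box> D - T \<times> V(D) project to walks in G - T. *)

theory Submission
  imports Defs
begin

lemma reach_minus_start: "reach_minus H S x y \<Longrightarrow> x \<in> verts H - S"
  unfolding reach_minus_def by simp

lemma reach_minus_refl: "x \<in> verts H - S \<Longrightarrow> reach_minus H S x x"
  unfolding reach_minus_def by simp

lemma reach_minus_edge:
  "adj H x y \<Longrightarrow> x \<in> verts H - S \<Longrightarrow> y \<notin> S \<Longrightarrow> reach_minus H S x y"
  unfolding reach_minus_def by auto

lemma reach_minus_trans:
  "reach_minus H S x y \<Longrightarrow> reach_minus H S y z \<Longrightarrow> reach_minus H S x z"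
  unfolding reach_minus_def by auto

lemma reach_minus_map:
  assumes "reach_minus H S x y" and "f x \<in> verts H' - S'"
    and "\<And>a b. adj H a b \<Longrightarrow> a \<notin> S \<Longrightarrow> b \<notin> S \<Longrightarrow> reach_minus H' S' (f a) (f b)"
  shows "reach_minus H' S' (f x) (f y)"
proof -
  have "(\<lambda>u v. adj H u v \<and> u \<notin> S \<and> v \<notin> S)\<^sup>*\<^sup>* x y"
    using assms(1) unfolding reach_minus_def by simp
  then show ?thesis
  proof (induction rule: rtranclp_induct)
    case base
    show ?case using assms(2) by (rule reach_minus_refl)
  next
    case (step y z)
    then have "reach_minus H' S' (f y) (f z)" using assms(3) by blast
    with step.IH show ?case by (rule reach_minus_trans)
  qed
qed

lemma reach_minus_ray_tail:
  assumes "is_ray H r" and "\<forall>i\<ge>N. r i \<notin> S" and "N \<le> i"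
  shows "reach_minus H S (r N) (r i)"
  using assms(3)
proof (induction rule: dec_induct)
  case base
  show ?case using assms(1,2) unfolding is_ray_def by (auto intro: reach_minus_refl)
next
  case (step i)
  have "adj H (r i) (r (Suc i))" "r i \<in> verts H" using assms(1) unfolding is_ray_def by blast+
  moreover have "r i \<notin> S" "r (Suc i) \<notin> S" using assms(2) step.hyps by auto
  ultimately have "reach_minus H S (r i) (r (Suc i))" by (auto intro: reach_minus_edge)
  with step.IH show ?case by (rule reach_minus_trans)
qed

lemma inj_eventually_avoids_finite:
  fixes f :: "nat \<Rightarrow> 'a"
  assumes "inj f" and "finite S"
  obtains N where "\<forall>i\<ge>N. f i \<notin> S"
proof -
  have "finite (f -` S)" using assms by (intro finite_vimageI)
  then obtain N where "\<forall>i\<in>f -` S. i < N" unfolding finite_nat_set_iff_bounded by blast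
  then show ?thesis using that by (meson leD vimageI)
qed

lemma ray_equiv_iff:
  "ray_equiv H r s \<longleftrightarrow> (\<forall>S. finite S \<and> S \<subseteq> verts H \<longrightarrow>
     (\<exists>x n m. (\<forall>i\<ge>n. reach_minus H S x (r i)) \<and> (\<forall>j\<ge>m. reach_minus H S x (s j))))"
    (is "_ \<longleftrightarrow> (\<forall>S. _ \<longrightarrow> ?tails S)")
proof -
  have "(\<exists>C\<in>components_minus H S. \<exists>n m. r ` {n..} \<subseteq> C \<and> s ` {m..} \<subseteq> C) \<longleftrightarrow> ?tails S"
    for S
  proof
    assume "\<exists>C\<in>components_minus H S. \<exists>n m. r ` {n..} \<subseteq> C \<and> s ` {m..} \<subseteq> C"
    then show "?tails S" unfolding components_minus_def by (auto simp: image_subset_iff)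
  next
    assume "?tails S"
    then obtain x n m where r: "\<forall>i\<ge>n. reach_minus H S x (r i)"
      and s: "\<forall>j\<ge>m. reach_minus H S x (s j)"
      by blast
    have "x \<in> verts H - S" using reach_minus_start[OF r[rule_format, OF order_refl]] .
    then have "{y. reach_minus H S x y} \<in> components_minus H S"
      unfolding components_minus_def by blast
    moreover have "r ` {n..} \<subseteq> {y. reach_minus H S x y}" "s ` {m..} \<subseteq> {y. reach_minus H S x y}"
      using r s by auto
    ultimately show "\<exists>C\<in>components_minus H S. \<exists>n m. r ` {n..} \<subseteq> C \<and> s ` {m..} \<subseteq> C"
      by blast
  qed
  then show ?thesis unfolding ray_equiv_def by simp
qed

lemma is_ray_subgraph: "subgraph A B \<Longrightarrow> is_ray A r \<Longrightarrow> is_ray B r"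
  unfolding subgraph_def is_ray_def by blast

lemma ray_equiv_subgraph:
  assumes A: "is_graph A" and sub: "subgraph A B" and equiv: "ray_equiv A r s"
  shows "ray_equiv B r s"
  unfolding ray_equiv_iff
proof (intro allI impI)
  fix S assume S: "finite S \<and> S \<subseteq> verts B"
  have "finite (S \<inter> verts A) \<and> S \<inter> verts A \<subseteq> verts A" using S by auto
  from equiv[unfolded ray_equiv_iff, rule_format, OF this] obtain x n m where
    r: "\<forall>i\<ge>n. reach_minus A (S \<inter> verts A) x (r i)" and
    s: "\<forall>j\<ge>m. reach_minus A (S \<inter> verts A) x (s j)"
    by blast
  have "x \<in> verts A - S \<inter> verts A" using reach_minus_start[OF r[rule_format, OF order_refl]] .
  then have x: "x \<in> verts B - S" using sub unfolding subgraph_def by blast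
  have edge: "reach_minus B S a b"
    if "adj A a b" "a \<notin> S \<inter> verts A" "b \<notin> S \<inter> verts A" for a b
  proof -
    have "a \<in> verts A" "b \<in> verts A" using A that(1) unfolding is_graph_def by blast+
    moreover have "adj B a b" using sub that(1) unfolding subgraph_def by blast
    ultimately show ?thesis
      using sub that unfolding subgraph_def by (blast intro: reach_minus_edge)
  qed
  have lift: "reach_minus B S x y" if "reach_minus A (S \<inter> verts A) x y" for y
    using reach_minus_map[where f = id, unfolded id_apply, OF that x edge] .
  have "\<forall>i\<ge>n. reach_minus B S x (r i)" "\<forall>j\<ge>m. reach_minus B S x (s j)"
    using r s lift by simp_all
  then show "\<exists>x n m. (\<forall>i\<ge>n. reach_minus B S x (r i)) \<and> (\<forall>j\<ge>m. reach_minus B S x (s j))"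
    by (intro exI conjI)
qed

lemma finite_fibres_last_visit:
  fixes p :: "nat \<Rightarrow> 'a"
  assumes fin: "\<And>g. finite {j. p j = g}"
  obtains last where "\<And>i. p (last (p i)) = p i" and "\<And>i. i \<le> last (p i)"
    and "\<And>i j. last (p i) < j \<Longrightarrow> p j \<noteq> p i"
proof
  fix i
  have "Max {j. p j = p i} \<in> {j. p j = p i}" by (rule Max_in) (use fin in auto)
  then show "p (Max {j. p j = p i}) = p i" by simp
  show "i \<le> Max {j. p j = p i}" by (rule Max_ge) (use fin in auto)
next
  fix i j assume "Max {j. p j = p i} < j"
  moreover have "p j = p i \<Longrightarrow> j \<le> Max {j. p j = p i}" by (rule Max_ge) (use fin in auto)
  ultimately show "p j \<noteq> p i" by linarith
qed

text \<open>A walk that may pause but visits every vertex only finitely often contains a ray: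
  jump from each vertex to the step after its last visit.\<close>

lemma lazy_walk_contains_ray:
  fixes p :: "nat \<Rightarrow> 'a"
  assumes fin: "\<And>g. finite {j. p j = g}"
    and step: "\<And>i. p i = p (Suc i) \<or> E (p i) (p (Suc i))"
  obtains J where "strict_mono J" and "inj (p \<circ> J)" and "\<And>k. E (p (J k)) (p (J (Suc k)))"
proof -
  obtain last where last: "\<And>i. p (last (p i)) = p i" "\<And>i. i \<le> last (p i)"
    "\<And>i j. last (p i) < j \<Longrightarrow> p j \<noteq> p i"
    using finite_fibres_last_visit[OF fin] by blast
  define J where "J = rec_nat (last (p 0)) (\<lambda>_ j. last (p (Suc j)))"
  have J_Suc: "J (Suc k) = last (p (Suc (J k)))" for k unfolding J_def by simp
  have J_last: "last (p (J k)) = J k" for k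
    by (cases k) (simp_all add: J_def last(1))
  have J_less: "J k < J (Suc k)" for k using last(2)[of "Suc (J k)"] J_Suc[of k] by simp
  then have mono: "strict_mono J" by (simp add: strict_mono_Suc_iff)
  moreover have "inj (p \<circ> J)"
  proof (rule linorder_injI)
    fix k l :: nat assume "k < l"
    then have "last (p (J k)) < J l" using mono J_last by (simp add: strict_mono_less)
    then show "(p \<circ> J) k \<noteq> (p \<circ> J) l" using last(3) by fastforce
  qed
  moreover have "E (p (J k)) (p (J (Suc k)))" for k
  proof -
    have "p (J (Suc k)) = p (Suc (J k))" using J_Suc last(1) by simp
    moreover have "p (Suc (J k)) \<noteq> p (J k)" using last(3)[of "J k"] J_last[of k] by simp
    ultimately show ?thesis using step[of "J k"] by auto
  qed
  ultimately show ?thesis using that by blast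
qed

lemma is_graph_layer: "is_graph G \<Longrightarrow> is_graph (layer G x0)"
  unfolding is_graph_def layer_def by auto

lemma subgraph_layer_cart_prod:
  "is_graph G \<Longrightarrow> x0 \<in> verts D \<Longrightarrow> subgraph (layer G x0) (cart_prod G D)"
  unfolding is_graph_def subgraph_def layer_def cart_prod_def by auto

lemma reach_minus_cart_prod_fibre:
  assumes D: "is_graph D" "connected_graph D" and g: "g \<in> verts G" "g \<notin> fst ` S"
    and "d \<in> verts D" "d' \<in> verts D"
  shows "reach_minus (cart_prod G D) S (g, d) (g, d')"
proof -
  have "reach_minus D {} d d'" using assms(2,5,6) unfolding connected_graph_def by blast
  then show ?thesis
  proof (rule reach_minus_map[where f = "Pair g"])
    show "(g, d) \<in> verts (cart_prod G D) - S"
      using g assms(5) by (force simp: cart_prod_def)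
    fix a b assume ab: "adj D a b"
    then have "a \<in> verts D" "b \<in> verts D" using D(1) unfolding is_graph_def by blast+
    then show "reach_minus (cart_prod G D) S (g, a) (g, b)"
      using ab g by (intro reach_minus_edge) (force simp: cart_prod_def)+
  qed
qed

lemma reach_minus_cart_prod_fst:
  assumes "reach_minus (cart_prod G D) (T \<times> verts D) x y"
  shows "reach_minus G T (fst x) (fst y)"
  using assms
proof (rule reach_minus_map)
  show "fst x \<in> verts G - T"
    using reach_minus_start[OF assms] by (auto simp: cart_prod_def)
  fix a b assume "adj (cart_prod G D) a b" "a \<notin> T \<times> verts D" "b \<notin> T \<times> verts D"
  then show "reach_minus G T (fst a) (fst b)"
    by (cases a; cases b) (auto simp: cart_prod_def intro: reach_minus_refl reach_minus_edge)
qed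

lemma reach_minus_layer:
  assumes G: "is_graph G" and "reach_minus G T g g'"
  shows "reach_minus (layer G x0) (T \<times> {x0}) (g, x0) (g', x0)"
  using assms(2)
proof (rule reach_minus_map[where f = "\<lambda>g. (g, x0)"])
  show "(g, x0) \<in> verts (layer G x0) - T \<times> {x0}"
    using reach_minus_start[OF assms(2)] by (simp add: layer_def)
  fix a b assume "adj G a b" "a \<notin> T" "b \<notin> T"
  moreover have "a \<in> verts G" using G \<open>adj G a b\<close> unfolding is_graph_def by blast
  ultimately show "reach_minus (layer G x0) (T \<times> {x0}) (a, x0) (b, x0)"
    by (intro reach_minus_edge) (simp_all add: layer_def)
qed

lemma layer_ray_equiv_of_cart_prod:
  assumes G: "is_graph G" and D: "finite (verts D)"
    and r: "is_ray (layer G x0) r" and s: "is_ray (layer G x0) s"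
    and equiv: "ray_equiv (cart_prod G D) r s"
  shows "ray_equiv (layer G x0) r s"
  unfolding ray_equiv_iff
proof (intro allI impI)
  fix S assume S: "finite S \<and> S \<subseteq> verts (layer G x0)"
  define T where "T = fst ` S"
  have S_eq: "S = T \<times> {x0}" using S unfolding T_def layer_def by force
  have "finite (T \<times> verts D) \<and> T \<times> verts D \<subseteq> verts (cart_prod G D)"
    using S D unfolding T_def layer_def cart_prod_def by auto
  from equiv[unfolded ray_equiv_iff, rule_format, OF this] obtain x n m where
    rB: "\<forall>i\<ge>n. reach_minus (cart_prod G D) (T \<times> verts D) x (r i)" and
    sB: "\<forall>j\<ge>m. reach_minus (cart_prod G D) (T \<times> verts D) x (s j)"
    by blast
  have project: "reach_minus (layer G x0) S (fst x, x0) y"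
    if "reach_minus (cart_prod G D) (T \<times> verts D) x y" and "y \<in> verts (layer G x0)" for y
  proof -
    have "y = (fst y, x0)" using that(2) by (auto simp: layer_def)
    then show ?thesis
      using reach_minus_layer[OF G reach_minus_cart_prod_fst[OF that(1)]] S_eq by metis
  qed
  have "\<forall>i\<ge>n. reach_minus (layer G x0) S (fst x, x0) (r i)"
    "\<forall>j\<ge>m. reach_minus (layer G x0) S (fst x, x0) (s j)"
    using rB sB r s project unfolding is_ray_def by simp_all
  then show "\<exists>x n m. (\<forall>i\<ge>n. reach_minus (layer G x0) S x (r i)) \<and>
      (\<forall>j\<ge>m. reach_minus (layer G x0) S x (s j))"
    by blast
qed

lemma is_ray_layer: "is_ray G h \<Longrightarrow> is_ray (layer G x0) (\<lambda>k. (h k, x0))"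
  unfolding is_ray_def layer_def inj_def by simp

lemma cart_prod_ray_projection_contains_ray:
  assumes D: "finite (verts D)" and r: "is_ray (cart_prod G D) r"
  obtains J where "strict_mono J" and "is_ray G (\<lambda>k. fst (r (J k)))"
proof -
  have r_verts: "r i \<in> verts G \<times> verts D" for i
    using r unfolding is_ray_def cart_prod_def by auto
  have fibres: "finite {i. fst (r i) = g}" for g
  proof (rule finite_subset)
    show "{i. fst (r i) = g} \<subseteq> r -` ({g} \<times> verts D)" using r_verts by (auto simp: mem_Times_iff)
    show "finite (r -` ({g} \<times> verts D))"
      using r D unfolding is_ray_def by (intro finite_vimageI) auto
  qed
  have lazy: "fst (r i) = fst (r (Suc i)) \<or> adj G (fst (r i)) (fst (r (Suc i)))" for i
  proof -
    have "adj (cart_prod G D) (r i) (r (Suc i))" using r unfolding is_ray_def by blast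
    then show ?thesis by (cases "r i"; cases "r (Suc i)") (auto simp: cart_prod_def)
  qed
  obtain J where J: "strict_mono J" "inj ((\<lambda>i. fst (r i)) \<circ> J)"
    "\<And>k. adj G (fst (r (J k))) (fst (r (J (Suc k))))"
    using lazy_walk_contains_ray[of "\<lambda>i. fst (r i)" "adj G"] fibres lazy by blast
  moreover have "fst (r (J k)) \<in> verts G" for k using r_verts by (auto simp: mem_Times_iff)
  ultimately have "is_ray G (\<lambda>k. fst (r (J k)))" unfolding is_ray_def comp_def by blast
  with J(1) show ?thesis using that by blast
qed

lemma cart_prod_ray_equiv_layer_ray:
  assumes G: "is_graph G" and D: "is_graph D" "finite (verts D)" "connected_graph D"
    and x0: "x0 \<in> verts D" and r: "is_ray (cart_prod G D) r"
  shows "\<exists>s. is_ray (layer G x0) s \<and> ray_equiv (cart_prod G D) r s"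
proof -
  let ?B = "cart_prod G D"
  obtain J where J: "strict_mono J" and h: "is_ray G (\<lambda>k. fst (r (J k)))"
    using cart_prod_ray_projection_contains_ray[OF D(2) r] .
  define h where "h k = fst (r (J k))" for k
  define s where "s k = (h k, x0)" for k
  have inj_r: "inj r" using r unfolding is_ray_def by blast
  have inj_h: "inj h" and h_verts: "\<And>k. h k \<in> verts G"
    using h unfolding h_def is_ray_def by auto
  have r_verts: "r i \<in> verts G \<times> verts D" for i
    using r unfolding is_ray_def cart_prod_def by auto
  have s_ray: "is_ray (layer G x0) s"
    using is_ray_layer[OF h] unfolding s_def h_def .
  have s_ray_B: "is_ray ?B s"
    using is_ray_subgraph[OF subgraph_layer_cart_prod[OF G x0] s_ray] .
  have "ray_equiv ?B r s" unfolding ray_equiv_iff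
  proof (intro allI impI)
    fix S assume S: "finite S \<and> S \<subseteq> verts ?B"
    then have "finite S" "finite (fst ` S)" by simp_all
    obtain N where N: "\<forall>i\<ge>N. r i \<notin> S"
      using inj_eventually_avoids_finite[OF inj_r \<open>finite S\<close>] .
    obtain K where K: "\<forall>k\<ge>K. h k \<notin> fst ` S"
      using inj_eventually_avoids_finite[OF inj_h \<open>finite (fst ` S)\<close>] .
    define M where "M = max N K"
    have s_avoids: "\<forall>k\<ge>M. s k \<notin> S"
      using K unfolding M_def s_def by (force intro: rev_image_eqI)
    have r_tail: "\<forall>i\<ge>N. reach_minus ?B S (r N) (r i)"
      using reach_minus_ray_tail[OF r N] by simp
    have "N \<le> J M" using strict_mono_imp_increasing[OF J(1), of M] unfolding M_def by linarith
    then have "reach_minus ?B S (r N) (h M, snd (r (J M)))"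
      using r_tail unfolding h_def by simp
    moreover have "reach_minus ?B S (h M, snd (r (J M))) (s M)"
      unfolding s_def using r_verts K D(1,3) x0 h_verts unfolding M_def
      by (intro reach_minus_cart_prod_fibre) (auto simp: mem_Times_iff)
    ultimately have "reach_minus ?B S (r N) (s M)" by (rule reach_minus_trans)
    then have "\<forall>k\<ge>M. reach_minus ?B S (r N) (s k)"
      using reach_minus_trans[OF _ reach_minus_ray_tail[OF s_ray_B s_avoids]] by simp
    then show "\<exists>x n m. (\<forall>i\<ge>n. reach_minus ?B S x (r i)) \<and> (\<forall>j\<ge>m. reach_minus ?B S x (s j))"
      using r_tail by blast
  qed
  with s_ray show ?thesis by blast
qed

theorem lemma17:
  fixes G :: "'a graph" and D :: "'b graph" and x0 :: 'b
  assumes "is_graph G" and "infinite (verts G)" and "locally_finite G"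
    and "is_graph D" and "finite (verts D)" and "connected_graph D"
    and "x0 \<in> verts D"
  shows "faithful (layer G x0) (cart_prod G D)"
  unfolding faithful_def
proof (intro conjI allI impI)
  show "subgraph (layer G x0) (cart_prod G D)"
    using assms(1,7) by (rule subgraph_layer_cart_prod)
  show "\<exists>s. is_ray (layer G x0) s \<and> ray_equiv (cart_prod G D) r s"
    if "is_ray (cart_prod G D) r" for r
    using cart_prod_ray_equiv_layer_ray[OF assms(1,4,5,6,7) that] .
  show "ray_equiv (layer G x0) r s \<longleftrightarrow> ray_equiv (cart_prod G D) r s"
    if "is_ray (layer G x0) r \<and> is_ray (layer G x0) s" for r s
    using ray_equiv_subgraph[OF is_graph_layer[OF assms(1)] subgraph_layer_cart_prod[OF assms(1,7)]]
      layer_ray_equiv_of_cart_prod[OF assms(1,5)] that by blast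
qed

end
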